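(* Fix a base $\beta\ge2$ and mantissa length $t$, and let $u=\beta^{1-t}/2$. For every real matrix $A$ together with a floating-point elimination run that belongs to $\widehat{\mathbf{PP}}_n(\mathbb{R})$, there exists $B\in\mathbf{PP}_n(\mathbb{R})$ such that $b^{(k)}_{i,j}=\hat a^{(k)}_{i,j}$ whenever $i=k$ or $j=k$, and $$\big|\hat a^{(k)}_{i,j}-b^{(k)}_{i,j}\big|\le u\sum_{\ell=k}^{\min\{i,j\}-1}\Big[|\hat a^{(\ell)}_{i,j}|+|\hat a^{(\ell)}_{\ell,j}|(3+u)\Big]$$ for all $k=1,\dots,n-1$ and all $i,j\in\{k,\dots,n\}$.
   Context: Exact Gaussian elimination without pivoting on $B=(b_{i,j})$: $b^{(1)}_{i,j}=b_{i,j}$, $b^{(k+1)}_{i,j}=b^{(k)}_{i,j}-b^{(k)}_{i,k}b^{(k)}_{k,j}/b^{(k)}_{k,k}$ for $k+1\le i,j\le n$. $\mathbf{PP}_n(\mathbb{R})$ is the set of invertible real $n\times n$ matrices for which this is defined (nonzero pivots) and $|b^{(k)}_{i,k}|\le|b^{(k)}_{k,k}|$ for all $k$ and $i\ge k$. Floating-point model (overflow/underflow ignored): a floating-point elimination run on a real $n\times n$ matrix $A$ is an array of numbers $\hat a^{(k)}_{i,j}$ given by $\hat a^{(1)}_{i,j}=a_{i,j}(1+\phi^{(0)}_{i,j})$ and $\hat a^{(k+1)}_{i,j}=\big[\hat a^{(k)}_{i,j}-s_{i,k}\hat a^{(k)}_{k,j}(1+\theta^{(k)}_{i,j})\big](1+\phi^{(k)}_{i,j})$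 for $k+1\le i,j\le n$, $k=1,\dots,n-1$, where $s_{i,k}=\frac{\hat a^{(k)}_{i,k}}{\hat a^{(k)}_{k,k}}(1+\varphi_{i,k})$, for some choice of parameters with $|\theta^{(k)}_{i,j}|,|\phi^{(k)}_{i,j}|,|\varphi_{i,k}|\le u$. $\widehat{\mathbf{PP}}_n(\mathbb{R})$ consists of (invertible $A$, run) pairs such that all $\hat a^{(k)}_{k,k}\ne0$, $|\hat a^{(k)}_{i,k}|\le|\hat a^{(k)}_{k,k}|$ for all $k$ and $i\ge k$, and moreover $|s_{i,k}|\le1$ and $|s_{i,k}(1+\theta^{(k)}_{i,j})|\le1$ for all $i,j,k$. *)

theory Defs
  imports Complex_Main "Jordan_Normal_Form.Matrix"
begin

text \<open>Matrices are represented as functions nat => nat => real, with indices 1..n.\<close>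

definition to_mat :: "nat \<Rightarrow> (nat \<Rightarrow> nat \<Rightarrow> real) \<Rightarrow> real mat" where
  "to_mat n B = mat n n (\<lambda>(i, j). B (Suc i) (Suc j))"

text \<open>Exact Gaussian elimination without pivoting: ge B k = b^(k) for k >= 1
  (ge B 0 = ge B 1 = B).\<close>
fun ge :: "(nat \<Rightarrow> nat \<Rightarrow> real) \<Rightarrow> nat \<Rightarrow> nat \<Rightarrow> nat \<Rightarrow> real" where
  "ge B 0 i j = B i j"
| "ge B (Suc k) i j =
     (if k = 0 then B i j
      else ge B k i j - ge B k i k * ge B k k j / ge B k k k)"

definition PP :: "nat \<Rightarrow> (nat \<Rightarrow> nat \<Rightarrow> real) \<Rightarrow> bool" where
  "PP n B \<longleftrightarrow> invertible_mat (to_mat n B)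
     \<and> (\<forall>k\<in>{1..n}. ge B k k k \<noteq> 0)
     \<and> (\<forall>k\<in>{1..n}. \<forall>i\<in>{k..n}. \<bar>ge B k i k\<bar> \<le> \<bar>ge B k k k\<bar>)"

definition mult_s :: "(nat \<Rightarrow> nat \<Rightarrow> nat \<Rightarrow> real) \<Rightarrow> (nat \<Rightarrow> nat \<Rightarrow> real) \<Rightarrow> nat \<Rightarrow> nat \<Rightarrow> real" where
  "mult_s ah vphi i k = ah k i k / ah k k k * (1 + vphi i k)"

text \<open>ah is a floating-point elimination run on A with unit roundoff u and
  rounding parameters theta k i j, phi k i j (k = 0 for the initial rounding), vphi i k.\<close>
definition fp_run ::
  "nat \<Rightarrow> real \<Rightarrow> (nat \<Rightarrow> nat \<Rightarrow> real) \<Rightarrow> (nat \<Rightarrow> nat \<Rightarrow> nat \<Rightarrow> real)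
   \<Rightarrow> (nat \<Rightarrow> nat \<Rightarrow> nat \<Rightarrow> real) \<Rightarrow> (nat \<Rightarrow> nat \<Rightarrow> nat \<Rightarrow> real)
   \<Rightarrow> (nat \<Rightarrow> nat \<Rightarrow> real) \<Rightarrow> bool" where
  "fp_run n u A ah theta phi vphi \<longleftrightarrow>
     (\<forall>i\<in>{1..n}. \<forall>j\<in>{1..n}. ah 1 i j = A i j * (1 + phi 0 i j) \<and> \<bar>phi 0 i j\<bar> \<le> u)
   \<and> (\<forall>k\<in>{1..n-1}. \<forall>i\<in>{k+1..n}. \<bar>vphi i k\<bar> \<le> u)
   \<and> (\<forall>k\<in>{1..n-1}. \<forall>i\<in>{k+1..n}. \<forall>j\<in>{k+1..n}.
        \<bar>theta k i j\<bar> \<le> u \<and> \<bar>phi k i j\<bar> \<le> u \<and>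
        ah (k+1) i j = (ah k i j - mult_s ah vphi i k * ah k k j * (1 + theta k i j))
                         * (1 + phi k i j))"

definition PP_hat ::
  "nat \<Rightarrow> real \<Rightarrow> (nat \<Rightarrow> nat \<Rightarrow> real) \<Rightarrow> (nat \<Rightarrow> nat \<Rightarrow> nat \<Rightarrow> real)
   \<Rightarrow> (nat \<Rightarrow> nat \<Rightarrow> nat \<Rightarrow> real) \<Rightarrow> (nat \<Rightarrow> nat \<Rightarrow> nat \<Rightarrow> real)
   \<Rightarrow> (nat \<Rightarrow> nat \<Rightarrow> real) \<Rightarrow> bool" where
  "PP_hat n u A ah theta phi vphi \<longleftrightarrow>
     invertible_mat (to_mat n A)
   \<and> fp_run n u A ah theta phi vphi
   \<and> (\<forall>k\<in>{1..n}. ah k k k \<noteq> 0)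
   \<and> (\<forall>k\<in>{1..n}. \<forall>i\<in>{k..n}. \<bar>ah k i k\<bar> \<le> \<bar>ah k k k\<bar>)
   \<and> (\<forall>k\<in>{1..n-1}. \<forall>i\<in>{k+1..n}. \<forall>j\<in>{k+1..n}.
        \<bar>mult_s ah vphi i k\<bar> \<le> 1 \<and> \<bar>mult_s ah vphi i k * (1 + theta k i j)\<bar> \<le> 1)"

end

theory Submission
  imports Defs "Jordan_Normal_Form.Determinant"
begin

text \<open>The exact matrix is B = L U, where L is the unit lower triangular matrix of the
  exact ratios ah k i k / ah k k k and U collects the computed pivot rows ah k k j.
  Exact elimination on L U reproduces the pivot rows and columns of the run, and the
  exact and computed Schur complements differ at each step only by the rounding in a
  single update, which is bounded in terms of ah l i j and ah l l j because all
  multipliers have modulus at most one. The value of u plays no role beyond being an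
  upper bound for the rounding parameters.\<close>

definition lu_of_run :: "(nat \<Rightarrow> nat \<Rightarrow> nat \<Rightarrow> real) \<Rightarrow> nat \<Rightarrow> nat \<Rightarrow> real" where
  "lu_of_run ah i j = (\<Sum>l = 1..min i j. ah l i l / ah l l l * ah l l j)"

lemma ge_lu_of_run:
  assumes "\<And>l. 1 \<le> l \<Longrightarrow> l < k \<Longrightarrow> ah l l l \<noteq> 0"
    and "1 \<le> k" "k \<le> i" "k \<le> j"
  shows "ge (lu_of_run ah) k i j = (\<Sum>l = k..min i j. ah l i l / ah l l l * ah l l j)"
  using assms
proof (induction k arbitrary: i j)
  case 0
  then show ?case by simp
next
  case (Suc k)
  show ?case
  proof (cases "k = 0")
    case True
    then show ?thesis by (simp add: lu_of_run_def)
  next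
    case False
    let ?G = "ge (lu_of_run ah) k"
    have nz: "ah k k k \<noteq> 0" using False Suc.prems(1) by simp
    have IH: "?G i' j' = (\<Sum>l = k..min i' j'. ah l i' l / ah l l l * ah l l j')"
      if "k \<le> i'" "k \<le> j'" for i' j'
      using Suc.IH Suc.prems(1) False that by simp
    have "?G i k = ah k i k" "?G k j = ah k k j" "?G k k = ah k k k"
      using IH[of i k] IH[of k j] IH[of k k] Suc.prems nz by (simp_all add: min_def)
    moreover have "(\<Sum>l = k..min i j. ah l i l / ah l l l * ah l l j)
       = ah k i k / ah k k k * ah k k j + (\<Sum>l = Suc k..min i j. ah l i l / ah l l l * ah l l j)"
      using Suc.prems by (subst sum.atLeast_Suc_atMost) auto
    ultimately show ?thesis using False IH[of i j] Suc.prems by simp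
  qed
qed

lemma ge_lu_of_run_pivot_row_col:
  assumes "\<And>l. 1 \<le> l \<Longrightarrow> l \<le> k \<Longrightarrow> ah l l l \<noteq> 0"
    and "1 \<le> k" "k \<le> i" "k \<le> j" "i = k \<or> j = k"
  shows "ge (lu_of_run ah) k i j = ah k i j"
proof -
  have "min i j = k" using assms(3-5) by auto
  then have "ge (lu_of_run ah) k i j = ah k i k / ah k k k * ah k k j"
    using assms by (simp add: ge_lu_of_run)
  then show ?thesis using assms(1)[of k] assms(2,5) by auto
qed

lemma to_mat_lu_of_run:
  "to_mat n (lu_of_run ah)
    = mat n n (\<lambda>(i, j). if j \<le> i then ah (Suc j) (Suc i) (Suc j) / ah (Suc j) (Suc j) (Suc j) else 0)
    * mat n n (\<lambda>(i, j). if i \<le> j then ah (Suc i) (Suc i) (Suc j) else 0)"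
  (is "_ = ?L * ?U")
proof (rule eq_matI)
  fix i j assume "i < dim_row (?L * ?U)" "j < dim_col (?L * ?U)"
  then have i: "i < n" and j: "j < n" by auto
  define F where "F l = ah l (Suc i) l / ah l l l * ah l l (Suc j)" for l
  have "(?L * ?U) $$ (i, j) = (\<Sum>r\<in>{0..<n}. ?L $$ (i, r) * ?U $$ (r, j))"
    using i j by (simp add: scalar_prod_def)
  also have "\<dots> = (\<Sum>r\<in>{0..<n}. if r \<le> min i j then F (Suc r) else 0)"
    using i j by (intro sum.cong) (auto simp: F_def)
  also have "\<dots> = (\<Sum>r = 0..min i j. F (Suc r))"
    using i j by (subst sum.mono_neutral_right[of "{0..<n}" "{0..min i j}"]) auto
  also have "\<dots> = (\<Sum>l = Suc 0..Suc (min i j). F l)"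
    by (rule sum.shift_bounds_cl_Suc_ivl[symmetric])
  also have "\<dots> = to_mat n (lu_of_run ah) $$ (i, j)"
    using i j by (simp add: to_mat_def lu_of_run_def F_def)
  finally show "to_mat n (lu_of_run ah) $$ (i, j) = (?L * ?U) $$ (i, j)" by simp
qed (auto simp: to_mat_def)

lemma invertible_mat_if_det_nonzero:
  fixes A :: "'a :: field mat"
  assumes "A \<in> carrier_mat n n" and "det A \<noteq> 0"
  shows "invertible_mat A"
proof -
  obtain B where "B \<in> carrier_mat n n" "B * A = 1\<^sub>m n" "A * B = 1\<^sub>m n"
    using det_non_zero_imp_unit[OF assms, of undefined] unfolding Units_def ring_mat_def by auto
  then show ?thesis
    using assms(1) unfolding invertible_mat_def inverts_mat_def by auto
qed

lemma invertible_to_mat_lu_of_run: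
  assumes "\<And>k. 1 \<le> k \<Longrightarrow> k \<le> n \<Longrightarrow> ah k k k \<noteq> 0"
  shows "invertible_mat (to_mat n (lu_of_run ah))"
proof -
  let ?L = "mat n n (\<lambda>(i, j). if j \<le> i then ah (Suc j) (Suc i) (Suc j) / ah (Suc j) (Suc j) (Suc j) else 0)"
  let ?U = "mat n n (\<lambda>(i, j). if i \<le> j then ah (Suc i) (Suc i) (Suc j) else 0)"
  have L: "?L \<in> carrier_mat n n" and U: "?U \<in> carrier_mat n n" by auto
  have "det ?L = prod_list (diag_mat ?L)"
    by (rule det_lower_triangular[OF _ L]) auto
  moreover have "det ?U = prod_list (diag_mat ?U)"
    by (rule det_upper_triangular[OF _ U]) (auto simp: upper_triangular_def)
  moreover have "0 \<notin> set (diag_mat ?L)" "0 \<notin> set (diag_mat ?U)"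
    using assms by (auto simp: diag_mat_def)
  ultimately have "det (?L * ?U) \<noteq> 0"
    by (simp add: det_mult[OF L U] prod_list_zero_iff)
  then show ?thesis
    unfolding to_mat_lu_of_run by (intro invertible_mat_if_det_nonzero[of _ n]) auto
qed

lemma PP_lu_of_run:
  assumes "\<forall>k\<in>{1..n}. ah k k k \<noteq> 0"
    and "\<forall>k\<in>{1..n}. \<forall>i\<in>{k..n}. \<bar>ah k i k\<bar> \<le> \<bar>ah k k k\<bar>"
  shows "PP n (lu_of_run ah)"
  using assms ge_lu_of_run_pivot_row_col[of k ah k k for k]
    ge_lu_of_run_pivot_row_col[of k ah i k for i k]
  unfolding PP_def by (auto intro!: invertible_to_mat_lu_of_run)

lemma elimination_step_error:
  fixes a p L s th ph vp u :: real
  assumes "\<bar>L\<bar> \<le> 1" "s = L * (1 + vp)" "\<bar>s * (1 + th)\<bar> \<le> 1"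
    and "\<bar>th\<bar> \<le> u" "\<bar>ph\<bar> \<le> u" "\<bar>vp\<bar> \<le> u"
  shows "\<bar>a - (a - s * p * (1 + th)) * (1 + ph) - L * p\<bar> \<le> u * (\<bar>a\<bar> + \<bar>p\<bar> * (3 + u))"
proof -
  have u: "0 \<le> u" using assms(4) by linarith
  have "a - (a - s * p * (1 + th)) * (1 + ph) - L * p
     = L * p * (vp + th + vp * th) - ph * a + ph * (s * (1 + th)) * p"
    using assms(2) by (simp add: algebra_simps)
  moreover have "\<bar>L * p * (vp + th + vp * th)\<bar> \<le> \<bar>p\<bar> * (2 * u + u * u)"
  proof -
    have "\<bar>vp * th\<bar> \<le> u * u"
      unfolding abs_mult using assms u by (simp add: mult_mono')
    then have "\<bar>vp + th + vp * th\<bar> \<le> 2 * u + u * u" using assms by linarith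
    moreover have "\<bar>L * p\<bar> \<le> \<bar>p\<bar>"
      using assms(1) unfolding abs_mult by (simp add: mult_left_le_one_le)
    ultimately show ?thesis
      unfolding abs_mult[of "L * p"] by (simp add: mult_mono')
  qed
  moreover have "\<bar>ph * a\<bar> \<le> u * \<bar>a\<bar>"
    unfolding abs_mult using assms(5) by (simp add: mult_right_mono)
  moreover have "\<bar>ph * (s * (1 + th)) * p\<bar> \<le> u * \<bar>p\<bar>"
  proof -
    have "\<bar>ph\<bar> * \<bar>s * (1 + th)\<bar> \<le> u * 1" using assms(3,5) u by (intro mult_mono') auto
    then show ?thesis
      unfolding abs_mult[of "ph * (s * (1 + th))" p] abs_mult[of ph "s * (1 + th)"]
      by (simp add: mult_right_mono)
  qed
  ultimately have "\<bar>a - (a - s * p * (1 + th)) * (1 + ph) - L * p\<bar>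
     \<le> \<bar>p\<bar> * (2 * u + u * u) + u * \<bar>a\<bar> + u * \<bar>p\<bar>"
    by linarith
  also have "\<dots> = u * (\<bar>a\<bar> + \<bar>p\<bar> * (3 + u))" by (simp add: algebra_simps)
  finally show ?thesis .
qed

lemma diff_ge_lu_of_run_telescope:
  assumes "\<And>l. 1 \<le> l \<Longrightarrow> l \<le> min i j \<Longrightarrow> ah l l l \<noteq> 0"
    and "1 \<le> k" "k \<le> i" "k \<le> j"
  shows "ah k i j - ge (lu_of_run ah) k i j
    = (\<Sum>l = k..<min i j. ah l i j - ah (Suc l) i j - ah l i l / ah l l l * ah l l j)"
proof -
  define m where "m = min i j"
  have km: "k \<le> m" using assms by (simp add: m_def)
  have "ge (lu_of_run ah) k i j = (\<Sum>l = k..<m. ah l i l / ah l l l * ah l l j) + ah m i j"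
    using assms km ge_lu_of_run_pivot_row_col[of m ah i j]
    by (simp add: ge_lu_of_run m_def sum.last_plus min_def)
  moreover have "ah k i j - ah m i j = (\<Sum>l = k..<m. ah l i j - ah (Suc l) i j)"
    using sum_Suc_diff'[OF km, of "\<lambda>l. ah l i j"]
    by (simp add: sum_negf[symmetric] sum_subtractf)
  ultimately show ?thesis by (simp add: sum_subtractf m_def)
qed

lemma ge_lu_of_run_error:
  assumes run: "fp_run n u A ah theta phi vphi"
    and nz: "\<forall>k\<in>{1..n}. ah k k k \<noteq> 0"
    and piv: "\<forall>k\<in>{1..n}. \<forall>i\<in>{k..n}. \<bar>ah k i k\<bar> \<le> \<bar>ah k k k\<bar>"
    and mult: "\<forall>k\<in>{1..n-1}. \<forall>i\<in>{k+1..n}. \<forall>j\<in>{k+1..n}.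
                 \<bar>mult_s ah vphi i k * (1 + theta k i j)\<bar> \<le> 1"
    and k: "k \<in> {1..n-1}" and i: "i \<in> {k..n}" and j: "j \<in> {k..n}"
  shows "\<bar>ah k i j - ge (lu_of_run ah) k i j\<bar>
    \<le> u * (\<Sum>l = k..<min i j. \<bar>ah l i j\<bar> + \<bar>ah l l j\<bar> * (3 + u))"
proof -
  have "ah k i j - ge (lu_of_run ah) k i j
    = (\<Sum>l = k..<min i j. ah l i j - ah (Suc l) i j - ah l i l / ah l l l * ah l l j)"
    using nz k i j by (intro diff_ge_lu_of_run_telescope) auto
  then have "\<bar>ah k i j - ge (lu_of_run ah) k i j\<bar>
    \<le> (\<Sum>l = k..<min i j. \<bar>ah l i j - ah (Suc l) i j - ah l i l / ah l l l * ah l l j\<bar>)"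
    by (simp add: sum_abs)
  also have "\<dots> \<le> (\<Sum>l = k..<min i j. u * (\<bar>ah l i j\<bar> + \<bar>ah l l j\<bar> * (3 + u)))"
  proof (rule sum_mono)
    fix l assume "l \<in> {k..<min i j}"
    then have l: "l \<in> {1..n-1}" "i \<in> {l+1..n}" "j \<in> {l+1..n}" using k i j by auto
    from run l have r: "\<bar>theta l i j\<bar> \<le> u" "\<bar>phi l i j\<bar> \<le> u" "\<bar>vphi i l\<bar> \<le> u"
      "ah (Suc l) i j = (ah l i j - mult_s ah vphi i l * ah l l j * (1 + theta l i j)) * (1 + phi l i j)"
      unfolding fp_run_def by auto
    have "\<bar>ah l i l / ah l l l\<bar> \<le> 1"
      using piv nz l by (simp add: abs_divide divide_le_eq_1)
    from elimination_step_error[OF this _ _ r(1-3)] mult l r(4)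
    show "\<bar>ah l i j - ah (Suc l) i j - ah l i l / ah l l l * ah l l j\<bar>
      \<le> u * (\<bar>ah l i j\<bar> + \<bar>ah l l j\<bar> * (3 + u))"
      by (simp add: mult_s_def)
  qed
  also have "\<dots> = u * (\<Sum>l = k..<min i j. \<bar>ah l i j\<bar> + \<bar>ah l l j\<bar> * (3 + u))"
    by (simp add: sum_distrib_left)
  finally show ?thesis .
qed

theorem mainTheorem8:
  fixes \<beta> t n :: nat and u :: real
    and A :: "nat \<Rightarrow> nat \<Rightarrow> real"
    and ah theta phi :: "nat \<Rightarrow> nat \<Rightarrow> nat \<Rightarrow> real"
    and vphi :: "nat \<Rightarrow> nat \<Rightarrow> real"
  assumes "\<beta> \<ge> 2" and "t \<ge> 1"
    and "u = real \<beta> powr (1 - real t) / 2"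
    and "PP_hat n u A ah theta phi vphi"
  shows "\<exists>B. PP n B
    \<and> (\<forall>k\<in>{1..n}. \<forall>i\<in>{k..n}. \<forall>j\<in>{k..n}. (i = k \<or> j = k) \<longrightarrow> ge B k i j = ah k i j)
    \<and> (\<forall>k\<in>{1..n-1}. \<forall>i\<in>{k..n}. \<forall>j\<in>{k..n}.
         \<bar>ah k i j - ge B k i j\<bar>
           \<le> u * (\<Sum>l = k..<min i j. \<bar>ah l i j\<bar> + \<bar>ah l l j\<bar> * (3 + u)))"
proof (intro exI conjI)
  from assms(4) have run: "fp_run n u A ah theta phi vphi"
    and nz: "\<forall>k\<in>{1..n}. ah k k k \<noteq> 0"
    and piv: "\<forall>k\<in>{1..n}. \<forall>i\<in>{k..n}. \<bar>ah k i k\<bar> \<le> \<bar>ah k k k\<bar>"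
    and mult: "\<forall>k\<in>{1..n-1}. \<forall>i\<in>{k+1..n}. \<forall>j\<in>{k+1..n}.
                 \<bar>mult_s ah vphi i k * (1 + theta k i j)\<bar> \<le> 1"
    unfolding PP_hat_def by auto
  show "PP n (lu_of_run ah)" using nz piv by (rule PP_lu_of_run)
  show "\<forall>k\<in>{1..n}. \<forall>i\<in>{k..n}. \<forall>j\<in>{k..n}. (i = k \<or> j = k) \<longrightarrow> ge (lu_of_run ah) k i j = ah k i j"
    using nz by (auto intro: ge_lu_of_run_pivot_row_col)
  show "\<forall>k\<in>{1..n-1}. \<forall>i\<in>{k..n}. \<forall>j\<in>{k..n}. \<bar>ah k i j - ge (lu_of_run ah) k i j\<bar>
           \<le> u * (\<Sum>l = k..<min i j. \<bar>ah l i j\<bar> + \<bar>ah l l j\<bar> * (3 + u))"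
    using ge_lu_of_run_error[OF run nz piv mult] by blast
qed

end
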